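(* Let $\phi\in\Phi$, let $f:\mathbb{R}^n\to(-\infty,+\infty]$ be proper lsc, $\Omega\subseteq\mathbb{R}^n$ closed, $\delta\ge0$, $p\in[1,\infty]$, and $\mathcal{J}=\{J_1,\dots,J_m\}$ a partition of $\{1,\dots,n\}$. Suppose the problem $\min_x\{\|G_{\mathcal{J},p}(x)\|_0: f(x)\le\delta,\ x\in\Omega\}$ has a nonempty global optimal solution set and nonzero optimal value $s^*$, and let $\mathcal{S}=\{x\in\Omega: f(x)\le\delta\}$. Suppose there exists $\alpha>0$ such that $\pi_{s^*}(G_{\mathcal{J},p}(x))\ge\alpha$ for all $x\in\mathcal{S}$. Let $\bar\varrho=\phi'_-(1)/\alpha$. Then: (i) for all $x\in\mathcal{S}$ and $w\in[0,e]$, $\sum_{i=1}^m\phi(w_i)+\bar\varrho\langle e-w,G_{\mathcal{J},p}(x)\rangle\ge s^*$, where $s^*$ is also the optimal value of the MPEC $$\textstyle (Q)\ \min_{x,w}\{\sum_{i=1}^m\phi(w_i):\ \langle e-w,G_{\mathcal{J},p}(x)\rangle=0,\ 0\le w\le e,\ x\in\Omega,\ f(x)\le\delta\};$$ (ii) for every $\varrho>\bar\varrho$, the set of global optimal solutions of $$\textstyle \min_{x\in\mathbb{R}^n,w\in\mathbb{R}^m}\{\sum_{i=1}^m\phi(w_i)+\varrho\langle e-w,G_{\mathcal{J},p}(x)\rangle:\ f(x)\le\delta,\ x\in\Omega,\ 0\le w\le e\}$$ coincides with the set of global optimal solutions of $(Q)$.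
   Context: $\Phi$ is the family of proper lsc functions $\phi:\mathbb{R}\to(-\infty,+\infty]$ with $\mathrm{int}(\mathrm{dom}\,\phi)\supseteq[0,1]$, convex on $[0,1]$, such that $\min_{t\in[0,1]}\phi(t)=0$ is attained at a (fixed) point $t^*\in[0,1)$, and $\phi(1)=1$; $\phi'_-(1)$ is the left derivative of $\phi$ at $1$. $G_{\mathcal{J},p}(x):=(\|x_{J_1}\|_p,\dots,\|x_{J_m}\|_p)^T$; $\|v\|_0$ counts nonzero entries; $e$ is the all-ones vector; for a vector $v$, $\pi(v)$ is the vector of the entries of $|v|$ arranged in nonincreasing order and $\pi_i(v)$ its $i$-th entry. *)

theory Defs
  imports "HOL-Analysis.Analysis" "HOL-Library.Extended_Real" "HOL-Library.Multiset"
begin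

definition lsc :: "('a::topological_space \<Rightarrow> ereal) \<Rightarrow> bool" where
  "lsc f \<longleftrightarrow> (\<forall>x. f x \<le> Liminf (at x) f)"

definition proper_fun :: "('a \<Rightarrow> ereal) \<Rightarrow> bool" where
  "proper_fun f \<longleftrightarrow> (\<forall>x. f x \<noteq> -\<infinity>) \<and> (\<exists>x. f x \<noteq> \<infinity>)"

definition PhiFamily :: "(real \<Rightarrow> ereal) set" where
  "PhiFamily = {phi. proper_fun phi \<and> lsc phi
      \<and> {0..1} \<subseteq> interior {t. phi t < \<infinity>}
      \<and> convex_on {0..1} (\<lambda>t. real_of_ereal (phi t))
      \<and> (\<exists>ts\<in>{0..<1}. phi ts = 0 \<and> (\<forall>t\<in>{0..1}. phi ts \<le> phi t))
      \<and> phi 1 = 1}"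

definition left_deriv_at_1 :: "(real \<Rightarrow> ereal) \<Rightarrow> ereal" where
  "left_deriv_at_1 phi =
     Lim (at_left (1::real))
       (\<lambda>t. ereal ((real_of_ereal (phi 1) - real_of_ereal (phi t)) / (1 - t)))"

definition pnorm_sub :: "ereal \<Rightarrow> 'n set \<Rightarrow> real^'n \<Rightarrow> real" where
  "pnorm_sub p J x =
     (if p = \<infinity> then Max (insert 0 ((\<lambda>j. \<bar>x $ j\<bar>) ` J))
      else (\<Sum>j\<in>J. \<bar>x $ j\<bar> powr real_of_ereal p) powr (1 / real_of_ereal p))"

definition Gmap :: "('m::finite \<Rightarrow> 'n::finite set) \<Rightarrow> ereal \<Rightarrow> real^'n \<Rightarrow> real^'m" where
  "Gmap J p x = (\<chi> i. pnorm_sub p (J i) x)"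

definition is_partition :: "('m::finite \<Rightarrow> 'n::finite set) \<Rightarrow> bool" where
  "is_partition J \<longleftrightarrow> (\<forall>i. J i \<noteq> {}) \<and> (\<forall>i k. i \<noteq> k \<longrightarrow> J i \<inter> J k = {})
                      \<and> (\<Union>i. J i) = UNIV"

definition l0 :: "real^'m::finite \<Rightarrow> nat" where
  "l0 v = card {i. v $ i \<noteq> 0}"

text \<open>pi_k(v): k-th largest entry of |v| (k = 1, ..., m).\<close>
definition pi_k :: "nat \<Rightarrow> real^'m::finite \<Rightarrow> real" where
  "pi_k k v = rev (sorted_list_of_multiset (image_mset (\<lambda>i. \<bar>v $ i\<bar>) (mset_set UNIV))) ! (k - 1)"

definition inner_ew :: "real^'m::finite \<Rightarrow> real^'m \<Rightarrow> real" where
  "inner_ew w g = (\<Sum>i\<in>UNIV. (1 - w $ i) * g $ i)"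

definition sumphi :: "(real \<Rightarrow> ereal) \<Rightarrow> real^'m::finite \<Rightarrow> ereal" where
  "sumphi phi w = (\<Sum>i\<in>UNIV. phi (w $ i))"

definition box01 :: "(real^'m::finite) set" where
  "box01 = {w. \<forall>i. 0 \<le> w $ i \<and> w $ i \<le> 1}"

definition argmins :: "('a \<Rightarrow> ereal) \<Rightarrow> 'a set \<Rightarrow> 'a set" where
  "argmins obj F = {z\<in>F. \<forall>z'\<in>F. obj z \<le> obj z'}"

end

theory Submission
  imports Defs
begin

text \<open>
  Let D be the left derivative of phi at 1. By convexity the slope (1 - phi t) / (1 - t) is
  nondecreasing on [0,1), so D is its supremum; hence D \<ge> 1 / (1 - t*) > 0 and
  1 \<le> phi t + D (1 - t) for every t < 1. Consequently, for a group i with G_i(x) \<ge> alpha the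
  summand phi(w_i) + (D / alpha) (1 - w_i) G_i(x) is at least 1, and every summand is nonnegative.
  As at least s* groups satisfy G_i(x) \<ge> alpha, the penalised objective is at least s*, and
  strictly larger when rho > D / alpha and the complementarity term does not vanish. The value s*
  is attained in (Q) by taking w_i = 1 on the support of G(x*) and w_i = t* elsewhere, so both
  problems have optimal value s* and the same minimisers: the points of (Q) with value s*.
\<close>

lemma real_card_le_sum:
  fixes h :: "'a::finite \<Rightarrow> real"
  assumes "\<And>i. 0 \<le> h i" and "\<And>i. P i \<Longrightarrow> 1 \<le> h i"
  shows "real (card {i. P i}) \<le> (\<Sum>i\<in>UNIV. h i)"
proof -
  have "real (card {i. P i}) = (\<Sum>i\<in>{i. P i}. 1)" by simp
  also have "\<dots> \<le> (\<Sum>i\<in>{i. P i}. h i)" using assms(2) by (intro sum_mono) auto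
  also have "\<dots> \<le> (\<Sum>i\<in>UNIV. h i)" using assms(1) by (intro sum_mono2) auto
  finally show ?thesis .
qed

lemma sorted_desc_length_filter_ge:
  fixes L :: "'a::linorder list"
  assumes "sorted_wrt (\<ge>) L" and "k < length L" and "a \<le> L ! k"
  shows "Suc k \<le> length (filter (\<lambda>v. a \<le> v) L)"
proof -
  have "a \<le> v" if v: "v \<in> set (take (Suc k) L)" for v
  proof -
    obtain j where "j \<le> k" "v = L ! j"
      using v assms(2) by (auto simp: in_set_conv_nth less_Suc_eq_le)
    hence "L ! k \<le> v" using sorted_wrt_nth_less[OF assms(1)] assms(2) by (cases "j = k") auto
    thus ?thesis using assms(3) by simp
  qed
  hence "Suc k = length (filter (\<lambda>v. a \<le> v) (take (Suc k) L))" using assms(2) by simp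
  also have "\<dots> \<le> length (filter (\<lambda>v. a \<le> v) L)"
    by (metis append_take_drop_id filter_append length_append le_add1)
  finally show ?thesis .
qed

lemma card_abs_ge_if_pi_k_ge:
  fixes g :: "real^'m::finite"
  assumes "1 \<le> k" and "k \<le> CARD('m)" and "a \<le> pi_k k g"
  shows "k \<le> card {i. a \<le> \<bar>g $ i\<bar>}"
proof -
  define M where "M = image_mset (\<lambda>i. \<bar>g $ i\<bar>) (mset_set (UNIV::'m set))"
  define L where "L = rev (sorted_list_of_multiset M)"
  have L_M: "mset L = M" by (simp add: L_def)
  hence "length L = CARD('m)" by (metis M_def size_mset size_image_mset size_mset_set)
  moreover have "sorted_wrt (\<ge>) L"
    unfolding L_def sorted_wrt_rev by (metis sorted_sorted_list_of_multiset)
  moreover have "a \<le> L ! (k - 1)" using assms(3) by (simp add: pi_k_def L_def M_def)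
  ultimately have "Suc (k - 1) \<le> length (filter (\<lambda>v. a \<le> v) L)"
    using assms(1,2) by (intro sorted_desc_length_filter_ge) auto
  also have "\<dots> = size (filter_mset (\<lambda>v. a \<le> v) M)" by (metis L_M mset_filter size_mset)
  also have "\<dots> = card {i. a \<le> \<bar>g $ i\<bar>}" by (simp add: M_def filter_mset_image_mset)
  finally show ?thesis using assms(1) by simp
qed

lemma Gmap_nonneg: "0 \<le> Gmap J p x $ i"
  by (auto simp: Gmap_def pnorm_sub_def intro: Max_ge)

lemma l0_le_CARD: "l0 (v :: real^'m::finite) \<le> CARD('m)"
  unfolding l0_def by (rule card_mono) auto

lemma inner_ew_nonneg:
  assumes "w \<in> box01" and "\<forall>i. 0 \<le> g $ i"
  shows "0 \<le> inner_ew w g"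
  unfolding inner_ew_def using assms by (intro sum_nonneg) (auto simp: box01_def)

lemma inner_ew_eq_0_iff:
  assumes "w \<in> box01" and "\<forall>i. 0 \<le> g $ i"
  shows "inner_ew w g = 0 \<longleftrightarrow> (\<forall>i. g $ i \<noteq> 0 \<longrightarrow> w $ i = 1)"
proof -
  have "\<forall>i\<in>UNIV. 0 \<le> (1 - w $ i) * g $ i" using assms by (auto simp: box01_def)
  hence "inner_ew w g = 0 \<longleftrightarrow> (\<forall>i. (1 - w $ i) * g $ i = 0)"
    unfolding inner_ew_def by (simp add: sum_nonneg_eq_0_iff)
  thus ?thesis by auto
qed

lemma PhiFamily_finite:
  assumes "phi \<in> PhiFamily" and "t \<in> {0..1}"
  shows "phi t = ereal (real_of_ereal (phi t))"
proof -
  have "t \<in> interior {t. phi t < \<infinity>}" using assms by (auto simp: PhiFamily_def)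
  hence "phi t < \<infinity>" using interior_subset by blast
  moreover have "phi t \<noteq> -\<infinity>" using assms(1) by (simp add: PhiFamily_def proper_fun_def)
  ultimately show ?thesis by (cases "phi t") auto
qed

lemma PhiFamily_nonneg:
  assumes "phi \<in> PhiFamily" and "t \<in> {0..1}"
  shows "0 \<le> real_of_ereal (phi t)"
  using assms by (intro real_of_ereal_pos) (auto simp: PhiFamily_def)

lemma PhiFamily_zero:
  assumes "phi \<in> PhiFamily"
  obtains t where "t \<in> {0..<1}" and "phi t = 0"
  using assms unfolding PhiFamily_def by auto

lemma sumphi_eq_sum_real:
  assumes "phi \<in> PhiFamily" and "w \<in> box01"
  shows "sumphi phi w = ereal (\<Sum>i\<in>UNIV. real_of_ereal (phi (w $ i)))"
proof -
  have "sumphi phi w = (\<Sum>i\<in>UNIV. ereal (real_of_ereal (phi (w $ i))))"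
    unfolding sumphi_def using assms
    by (intro sum.cong refl PhiFamily_finite) (auto simp: box01_def)
  thus ?thesis by simp
qed

lemma left_deriv_at_1_eq_SUP:
  assumes "phi \<in> PhiFamily"
  shows "left_deriv_at_1 phi = (SUP t\<in>{0..<1}. ereal ((1 - real_of_ereal (phi t)) / (1 - t)))"
proof -
  define q where "q = (\<lambda>t. ereal ((1 - real_of_ereal (phi t)) / (1 - t)))"
  have phi1: "real_of_ereal (phi 1) = 1" using assms by (simp add: PhiFamily_def)
  have cvx: "convex_on {0..1} (\<lambda>t. real_of_ereal (phi t))"
    using assms by (simp add: PhiFamily_def)
  have "q x \<le> q t" if "0 \<le> x" "x \<le> t" "t < 1" for x t
  proof (cases "x = t")
    case False
    have "(real_of_ereal (phi x) - 1) / (x - 1) \<le> (real_of_ereal (phi t) - 1) / (t - 1)"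
      using convex_on_slope_le(2)[OF cvx, of x 1 t] that False phi1 by simp
    thus ?thesis unfolding q_def by (metis minus_diff_eq minus_divide_divide ereal_less_eq(3))
  qed simp
  hence "(q \<longlongrightarrow> Sup (q ` ({..<1} \<inter> {0..}))) (at 1 within ({..<1} \<inter> {0..}))"
    by (intro Lim_left_bound[where K = \<infinity>]) auto
  moreover have "{..<1} \<inter> {0..} = {0..<(1::real)}" by auto
  moreover have "at 1 within {0..<1} = at_left (1::real)"
    by (rule at_within_nhd[of _ "{0<..}"]) auto
  ultimately have "(q \<longlongrightarrow> (SUP t\<in>{0..<1}. q t)) (at_left 1)" by simp
  moreover have "left_deriv_at_1 phi = Lim (at_left 1) q"
    by (simp add: left_deriv_at_1_def q_def phi1)
  ultimately show ?thesis by (simp add: tendsto_Lim q_def)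
qed

lemma slope_le_left_deriv_at_1:
  assumes "phi \<in> PhiFamily" and "t \<in> {0..<1}"
  shows "ereal ((1 - real_of_ereal (phi t)) / (1 - t)) \<le> left_deriv_at_1 phi"
  unfolding left_deriv_at_1_eq_SUP[OF assms(1)] using assms(2) by (rule SUP_upper)

lemma one_le_left_deriv_at_1:
  assumes "phi \<in> PhiFamily"
  shows "1 \<le> left_deriv_at_1 phi"
proof -
  obtain t where t: "t \<in> {0..<1}" "phi t = 0" using PhiFamily_zero[OF assms] .
  hence "1 \<le> 1 / (1 - t)" by simp
  also have "ereal (1 / (1 - t)) \<le> left_deriv_at_1 phi"
    using slope_le_left_deriv_at_1[OF assms t(1)] t(2) by simp
  finally show ?thesis by (simp add: one_ereal_def)
qed

lemma left_deriv_at_1_real_bound: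
  assumes "phi \<in> PhiFamily" and "left_deriv_at_1 phi = ereal d" and "t \<in> {0..<1}"
  shows "1 - real_of_ereal (phi t) \<le> d * (1 - t)"
proof -
  have "(1 - real_of_ereal (phi t)) / (1 - t) \<le> d"
    using slope_le_left_deriv_at_1[OF assms(1,3)] assms(2) by simp
  thus ?thesis using assms(3) by (simp add: pos_divide_le_eq)
qed

lemma card_le_sum_real_phi_plus_penalty:
  fixes g w :: "real^'m::finite"
  assumes phi: "phi \<in> PhiFamily" and d: "left_deriv_at_1 phi = ereal d"
    and w: "w \<in> box01" and g: "\<forall>i. 0 \<le> g $ i" and \<alpha>: "0 < \<alpha>"
  shows "real (card {i. \<alpha> \<le> g $ i})
           \<le> (\<Sum>i\<in>UNIV. real_of_ereal (phi (w $ i))) + d / \<alpha> * inner_ew w g"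
proof -
  define h where "h i = real_of_ereal (phi (w $ i)) + d / \<alpha> * ((1 - w $ i) * g $ i)" for i
  have w01: "w $ i \<in> {0..1}" for i using w by (simp add: box01_def)
  have "0 \<le> d" using one_le_left_deriv_at_1[OF phi] d by simp
  hence "0 \<le> h i" for i
    unfolding h_def using PhiFamily_nonneg[OF phi w01] w01[of i] g \<alpha> by simp
  moreover have "1 \<le> h i" if "\<alpha> \<le> g $ i" for i
  proof (cases "w $ i = 1")
    case True
    thus ?thesis using phi by (simp add: h_def PhiFamily_def)
  next
    case False
    hence "w $ i \<in> {0..<1}" using w01[of i] by simp
    hence "1 - real_of_ereal (phi (w $ i)) \<le> d * (1 - w $ i)"
      by (rule left_deriv_at_1_real_bound[OF phi d])
    also have "\<dots> \<le> d * (1 - w $ i) * (g $ i / \<alpha>)"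
    proof -
      have "1 \<le> g $ i / \<alpha>" using that \<alpha> by simp
      moreover have "0 \<le> d * (1 - w $ i)" using \<open>0 \<le> d\<close> w01[of i] by simp
      ultimately show ?thesis using mult_left_mono by fastforce
    qed
    finally show ?thesis by (simp add: h_def field_simps)
  qed
  ultimately have "real (card {i. \<alpha> \<le> g $ i}) \<le> (\<Sum>i\<in>UNIV. h i)" by (rule real_card_le_sum)
  thus ?thesis by (simp add: h_def inner_ew_def sum.distrib sum_distrib_left)
qed

lemma card_le_sum_real_phi_if_complementary:
  fixes g w :: "real^'m::finite"
  assumes phi: "phi \<in> PhiFamily" and I: "inner_ew w g = 0"
    and w: "w \<in> box01" and g: "\<forall>i. 0 \<le> g $ i" and \<alpha>: "0 < \<alpha>"
  shows "real (card {i. \<alpha> \<le> g $ i}) \<le> (\<Sum>i\<in>UNIV. real_of_ereal (phi (w $ i)))"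
proof (rule real_card_le_sum)
  show "0 \<le> real_of_ereal (phi (w $ i))" for i
    using w by (intro PhiFamily_nonneg[OF phi]) (simp add: box01_def)
  show "1 \<le> real_of_ereal (phi (w $ i))" if "\<alpha> \<le> g $ i" for i
  proof -
    have "w $ i = 1" using I that \<alpha> inner_ew_eq_0_iff[OF w g] by force
    thus ?thesis using phi by (simp add: PhiFamily_def)
  qed
qed

lemma card_le_sumphi_plus_penalty:
  fixes g w :: "real^'m::finite"
  assumes phi: "phi \<in> PhiFamily" and w: "w \<in> box01" and g: "\<forall>i. 0 \<le> g $ i"
    and \<alpha>: "0 < \<alpha>"
  shows "ereal (real (card {i. \<alpha> \<le> g $ i}))
           \<le> sumphi phi w + left_deriv_at_1 phi / ereal \<alpha> * ereal (inner_ew w g)"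
proof (cases "left_deriv_at_1 phi")
  case (real d)
  thus ?thesis
    using card_le_sum_real_phi_plus_penalty[OF phi real w g \<alpha>] sumphi_eq_sum_real[OF phi w] \<alpha>
    by simp
next
  case PInf
  \<comment> \<open>In ereal, \<infinity> * 0 = 0, so only complementary weights need an argument.\<close>
  show ?thesis
  proof (cases "inner_ew w g = 0")
    case True
    thus ?thesis
      using card_le_sum_real_phi_if_complementary[OF phi True w g \<alpha>] sumphi_eq_sum_real[OF phi w]
      by (simp add: zero_ereal_def[symmetric])
  next
    case False
    hence "0 < inner_ew w g" using inner_ew_nonneg[OF w g] by simp
    thus ?thesis using PInf sumphi_eq_sum_real[OF phi w] \<alpha> by simp
  qed
next
  case MInf
  thus ?thesis using one_le_left_deriv_at_1[OF phi] by simp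
qed

lemma card_less_sumphi_plus_penalty:
  fixes g w :: "real^'m::finite"
  assumes phi: "phi \<in> PhiFamily" and w: "w \<in> box01" and g: "\<forall>i. 0 \<le> g $ i"
    and \<alpha>: "0 < \<alpha>" and \<rho>: "left_deriv_at_1 phi / ereal \<alpha> < ereal \<rho>"
    and I: "inner_ew w g \<noteq> 0"
  shows "ereal (real (card {i. \<alpha> \<le> g $ i})) < sumphi phi w + ereal (\<rho> * inner_ew w g)"
proof -
  obtain d where d: "left_deriv_at_1 phi = ereal d"
    using \<rho> one_le_left_deriv_at_1[OF phi] \<alpha> by (cases "left_deriv_at_1 phi") auto
  have "0 < inner_ew w g" using I inner_ew_nonneg[OF w g] by simp
  moreover have "d / \<alpha> < \<rho>" using \<rho> d \<alpha> by simp
  ultimately have "d / \<alpha> * inner_ew w g < \<rho> * inner_ew w g" by (rule mult_strict_right_mono[rotated])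
  thus ?thesis
    using card_le_sum_real_phi_plus_penalty[OF phi d w g \<alpha>] sumphi_eq_sum_real[OF phi w] by simp
qed

lemma complementary_weight_exists:
  fixes g :: "real^'m::finite"
  assumes phi: "phi \<in> PhiFamily"
  obtains w where "w \<in> box01" and "inner_ew w g = 0" and "sumphi phi w = ereal (real (l0 g))"
proof -
  obtain t where t: "t \<in> {0..<1}" "phi t = 0" using PhiFamily_zero[OF phi] .
  define w :: "real^'m" where "w = (\<chi> i. if g $ i \<noteq> 0 then 1 else t)"
  have "w \<in> box01" using t by (simp add: box01_def w_def)
  moreover have "inner_ew w g = 0"
    unfolding inner_ew_def by (rule sum.neutral) (simp add: w_def)
  moreover have "sumphi phi w = ereal (real (l0 g))"
  proof -
    have "(\<Sum>i\<in>UNIV. real_of_ereal (phi (w $ i))) = (\<Sum>i\<in>UNIV. if g $ i \<noteq> 0 then 1 else 0)"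
      using phi t by (intro sum.cong) (auto simp: w_def PhiFamily_def)
    also have "\<dots> = real (l0 g)" by (simp add: l0_def sum.If_cases)
    finally show ?thesis using sumphi_eq_sum_real[OF phi \<open>w \<in> box01\<close>] by simp
  qed
  ultimately show ?thesis by (rule that)
qed

lemma argmins_eq_level_set:
  fixes obj :: "'a \<Rightarrow> ereal"
  assumes "z0 \<in> F" and "obj z0 = v" and "\<forall>z\<in>F. v \<le> obj z"
  shows "argmins obj F = {z\<in>F. obj z = v}"
  using assms unfolding argmins_def by (auto intro: antisym)

lemma INF_eq_attained:
  fixes obj :: "'a \<Rightarrow> 'b::complete_linorder"
  assumes "z0 \<in> F" and "obj z0 = v" and "\<forall>z\<in>F. v \<le> obj z"
  shows "(INF z\<in>F. obj z) = v"
  using assms by (intro antisym INF_lower2[of z0] INF_greatest) auto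

context
  fixes phi :: "real \<Rightarrow> ereal" and G :: "'x \<Rightarrow> real^'m::finite" and S :: "'x set"
    and \<alpha> :: real and s :: nat
  assumes phi: "phi \<in> PhiFamily" and \<alpha>: "0 < \<alpha>" and G: "\<forall>x i. 0 \<le> G x $ i"
    and s_le_card: "\<forall>x\<in>S. s \<le> card {i. \<alpha> \<le> G x $ i}"
    and s_attained: "\<exists>x\<in>S. l0 (G x) = s"
begin

lemma sumphi_plus_penalty_ge:
  assumes "x \<in> S" and "w \<in> box01"
  shows "ereal (real s) \<le> sumphi phi w + left_deriv_at_1 phi / ereal \<alpha> * ereal (inner_ew w (G x))"
proof -
  have "ereal (real s) \<le> ereal (real (card {i. \<alpha> \<le> G x $ i}))"
    using s_le_card assms(1) by simp
  also have "\<dots> \<le> sumphi phi w + left_deriv_at_1 phi / ereal \<alpha> * ereal (inner_ew w (G x))"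
    using G by (intro card_le_sumphi_plus_penalty[OF phi assms(2) _ \<alpha>]) simp
  finally show ?thesis .
qed

lemma sumphi_ge_if_complementary:
  assumes "x \<in> S" and "w \<in> box01" and "inner_ew w (G x) = 0"
  shows "ereal (real s) \<le> sumphi phi w"
  using sumphi_plus_penalty_ge[OF assms(1,2)] assms(3) by (simp add: zero_ereal_def[symmetric])

lemma sumphi_plus_penalty_gt:
  assumes \<rho>: "left_deriv_at_1 phi / ereal \<alpha> < ereal \<rho>"
    and "x \<in> S" and "w \<in> box01" and "inner_ew w (G x) \<noteq> 0"
  shows "ereal (real s) < sumphi phi w + ereal (\<rho> * inner_ew w (G x))"
proof -
  have "ereal (real s) \<le> ereal (real (card {i. \<alpha> \<le> G x $ i}))"
    using s_le_card assms(2) by simp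
  also have "\<dots> < sumphi phi w + ereal (\<rho> * inner_ew w (G x))"
    using G assms(3,4) by (intro card_less_sumphi_plus_penalty[OF phi _ _ \<alpha> \<rho>]) simp_all
  finally show ?thesis .
qed

lemma complementary_optimum_exists:
  obtains x w where "x \<in> S" and "w \<in> box01" and "inner_ew w (G x) = 0"
    and "sumphi phi w = ereal (real s)"
proof -
  obtain x where "x \<in> S" "l0 (G x) = s" using s_attained by blast
  moreover obtain w where "w \<in> box01" "inner_ew w (G x) = 0" "sumphi phi w = ereal (real (l0 (G x)))"
    using complementary_weight_exists[OF phi] .
  ultimately show ?thesis using that by simp
qed

lemma INF_complementary_eq:
  "(INF z\<in>{(x, w). inner_ew w (G x) = 0 \<and> w \<in> box01 \<and> x \<in> S}. sumphi phi (snd z))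
     = ereal (real s)"
proof -
  obtain x0 w0 where "x0 \<in> S" "w0 \<in> box01" "inner_ew w0 (G x0) = 0"
    "sumphi phi w0 = ereal (real s)"
    using complementary_optimum_exists .
  thus ?thesis
    by (intro INF_eq_attained[of "(x0, w0)"]) (auto intro: sumphi_ge_if_complementary)
qed

lemma argmins_exact_penalty_eq:
  assumes \<rho>: "left_deriv_at_1 phi / ereal \<alpha> < ereal \<rho>"
  shows "argmins (\<lambda>(x, w). sumphi phi w + ereal (\<rho> * inner_ew w (G x)))
           {(x, w). x \<in> S \<and> w \<in> box01}
       = argmins (\<lambda>(x, w). sumphi phi w)
           {(x, w). inner_ew w (G x) = 0 \<and> w \<in> box01 \<and> x \<in> S}"
    (is "argmins ?P ?F = argmins ?obj ?Q")
proof -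
  obtain x0 w0 where "x0 \<in> S" "w0 \<in> box01" "inner_ew w0 (G x0) = 0"
    and z0: "sumphi phi w0 = ereal (real s)"
    using complementary_optimum_exists .
  hence "(x0, w0) \<in> ?Q" by simp
  have Q_ge: "\<forall>z\<in>?Q. ereal (real s) \<le> ?obj z"
    by (auto intro: sumphi_ge_if_complementary)
  have F_gt: "ereal (real s) < ?P z" if "z \<in> ?F - ?Q" for z
    using that sumphi_plus_penalty_gt[OF \<rho>] by auto
  have "\<forall>z\<in>?F. ereal (real s) \<le> ?P z"
    using Q_ge F_gt by (fastforce simp: less_imp_le)
  hence "argmins ?P ?F = {z\<in>?F. ?P z = ereal (real s)}"
    using \<open>(x0, w0) \<in> ?Q\<close> z0 by (intro argmins_eq_level_set[of "(x0, w0)"]) auto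
  also have "\<dots> = {z\<in>?Q. ?obj z = ereal (real s)}"
    using F_gt by fastforce
  also have "\<dots> = argmins ?obj ?Q"
    using \<open>(x0, w0) \<in> ?Q\<close> z0 Q_ge
    by (intro argmins_eq_level_set[of "(x0, w0)", symmetric]) auto
  finally show ?thesis .
qed

end

theorem theorem3p1:
  fixes phi :: "real \<Rightarrow> ereal"
    and f :: "real^'n::finite \<Rightarrow> ereal"
    and \<Omega> :: "(real^'n) set"
    and \<delta> :: real and p :: ereal
    and J :: "'m::finite \<Rightarrow> 'n set"
    and s :: nat and \<alpha> :: real
  assumes phi: "phi \<in> PhiFamily"
    and f_proper: "proper_fun f" and f_lsc: "lsc f"
    and \<Omega>_closed: "closed \<Omega>"
    and \<delta>_nonneg: "\<delta> \<ge> 0"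
    and p_range: "1 \<le> p"
    and J_part: "is_partition J"
    and s_opt: "\<exists>x\<in>{x\<in>\<Omega>. f x \<le> ereal \<delta>}. l0 (Gmap J p x) = s"
    and s_min: "\<forall>x\<in>{x\<in>\<Omega>. f x \<le> ereal \<delta>}. s \<le> l0 (Gmap J p x)"
    and s_nonzero: "s \<noteq> 0"
    and \<alpha>_pos: "\<alpha> > 0"
    and \<alpha>_bound: "\<forall>x\<in>{x\<in>\<Omega>. f x \<le> ereal \<delta>}. pi_k s (Gmap J p x) \<ge> \<alpha>"
  shows "(\<forall>x\<in>{x\<in>\<Omega>. f x \<le> ereal \<delta>}. \<forall>w\<in>box01.
            sumphi phi w + (left_deriv_at_1 phi / ereal \<alpha>) * ereal (inner_ew w (Gmap J p x))
              \<ge> ereal (real s))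
         \<and> (INF z\<in>{(x, w). inner_ew w (Gmap J p x) = 0 \<and> w \<in> box01 \<and> x \<in> \<Omega> \<and> f x \<le> ereal \<delta>}.
               sumphi phi (snd z)) = ereal (real s)
         \<and> (\<forall>\<rho>::real. ereal \<rho> > left_deriv_at_1 phi / ereal \<alpha> \<longrightarrow>
              argmins (\<lambda>(x, w). sumphi phi w + ereal (\<rho> * inner_ew w (Gmap J p x)))
                {(x, w). f x \<le> ereal \<delta> \<and> x \<in> \<Omega> \<and> w \<in> box01}
            = argmins (\<lambda>(x, w). sumphi phi w)
                {(x, w). inner_ew w (Gmap J p x) = 0 \<and> w \<in> box01 \<and> x \<in> \<Omega> \<and> f x \<le> ereal \<delta>})"
proof -
  let ?S = "{x\<in>\<Omega>. f x \<le> ereal \<delta>}"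
  have G: "\<forall>x i. 0 \<le> Gmap J p x $ i" by (simp add: Gmap_nonneg)
  have s_le_card: "\<forall>x\<in>?S. s \<le> card {i. \<alpha> \<le> Gmap J p x $ i}"
  proof
    fix x assume x: "x \<in> ?S"
    have "s \<le> CARD('m)" using s_min x l0_le_CARD le_trans by blast
    hence "s \<le> card {i. \<alpha> \<le> \<bar>Gmap J p x $ i\<bar>}"
      using s_nonzero \<alpha>_bound x by (intro card_abs_ge_if_pi_k_ge) auto
    thus "s \<le> card {i. \<alpha> \<le> Gmap J p x $ i}" using G by simp
  qed
  note penalty = phi \<alpha>_pos G s_le_card s_opt
  have F_eq: "{(x, w). f x \<le> ereal \<delta> \<and> x \<in> \<Omega> \<and> w \<in> box01}
      = {(x, w). x \<in> ?S \<and> w \<in> box01}"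
    by auto
  have "argmins (\<lambda>(x, w). sumphi phi w + ereal (\<rho> * inner_ew w (Gmap J p x)))
          {(x, w). f x \<le> ereal \<delta> \<and> x \<in> \<Omega> \<and> w \<in> box01}
        = argmins (\<lambda>(x, w). sumphi phi w)
          {(x, w). inner_ew w (Gmap J p x) = 0 \<and> w \<in> box01 \<and> x \<in> \<Omega> \<and> f x \<le> ereal \<delta>}"
    if "left_deriv_at_1 phi / ereal \<alpha> < ereal \<rho>" for \<rho>
    unfolding F_eq using argmins_exact_penalty_eq[OF penalty that] by simp
  thus ?thesis
    using sumphi_plus_penalty_ge[OF penalty] INF_complementary_eq[OF penalty] by simp
qed

end
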